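(* Let $P$ be an Eulerian poset and $I\subset P$ a proper ideal. Then $\mathrm{Bier}(P,I)$ is an Eulerian poset.
   Context: A graded poset (bounded, all maximal chains of equal length) is Eulerian if every interval $[x,y]$ with $x<y$ contains equally many elements of odd rank and of even rank. A proper ideal $I$ of $P$ is a nonempty down-closed subset different from $P$. The Bier poset $\mathrm{Bier}(P,I)$ consists of all intervals $[x,y]$ of $P$ with $x\in I$, $y\notin I$, ordered by reversed inclusion ($[x',y']\le[x,y]$ iff $x'\le x<y\le y'$), together with an additional top element $\hat1$. *)

theory Defs
  imports Main
begin

definition is_poset :: "'a set \<Rightarrow> ('a \<Rightarrow> 'a \<Rightarrow> bool) \<Rightarrow> bool" where
  "is_poset P le \<longleftrightarrow>
     (\<forall>x\<in>P. le x x) \<and>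
     (\<forall>x\<in>P. \<forall>y\<in>P. le x y \<and> le y x \<longrightarrow> x = y) \<and>
     (\<forall>x\<in>P. \<forall>y\<in>P. \<forall>z\<in>P. le x y \<and> le y z \<longrightarrow> le x z)"

definition is_chain :: "'a set \<Rightarrow> ('a \<Rightarrow> 'a \<Rightarrow> bool) \<Rightarrow> 'a set \<Rightarrow> bool" where
  "is_chain P le C \<longleftrightarrow> C \<subseteq> P \<and> (\<forall>x\<in>C. \<forall>y\<in>C. le x y \<or> le y x)"

definition maximal_chain :: "'a set \<Rightarrow> ('a \<Rightarrow> 'a \<Rightarrow> bool) \<Rightarrow> 'a set \<Rightarrow> bool" where
  "maximal_chain P le C \<longleftrightarrow>
     is_chain P le C \<and> (\<forall>D. is_chain P le D \<and> C \<subseteq> D \<longrightarrow> D = C)"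

definition is_bounded :: "'a set \<Rightarrow> ('a \<Rightarrow> 'a \<Rightarrow> bool) \<Rightarrow> bool" where
  "is_bounded P le \<longleftrightarrow> (\<exists>b\<in>P. \<exists>t\<in>P. \<forall>x\<in>P. le b x \<and> le x t)"

definition graded :: "'a set \<Rightarrow> ('a \<Rightarrow> 'a \<Rightarrow> bool) \<Rightarrow> bool" where
  "graded P le \<longleftrightarrow> finite P \<and> is_poset P le \<and> is_bounded P le \<and>
     (\<forall>C D. maximal_chain P le C \<and> maximal_chain P le D \<longrightarrow> card C = card D)"

definition rank :: "'a set \<Rightarrow> ('a \<Rightarrow> 'a \<Rightarrow> bool) \<Rightarrow> 'a \<Rightarrow> nat" where
  "rank P le z = Max {card C | C. is_chain P le C \<and> (\<forall>c\<in>C. le c z)} - 1"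

definition closed_interval :: "'a set \<Rightarrow> ('a \<Rightarrow> 'a \<Rightarrow> bool) \<Rightarrow> 'a \<Rightarrow> 'a \<Rightarrow> 'a set" where
  "closed_interval P le x y = {z\<in>P. le x z \<and> le z y}"

definition eulerian :: "'a set \<Rightarrow> ('a \<Rightarrow> 'a \<Rightarrow> bool) \<Rightarrow> bool" where
  "eulerian P le \<longleftrightarrow> graded P le \<and>
     (\<forall>x\<in>P. \<forall>y\<in>P. le x y \<and> x \<noteq> y \<longrightarrow>
        card {z \<in> closed_interval P le x y. even (rank P le z)} =
        card {z \<in> closed_interval P le x y. odd (rank P le z)})"

definition proper_ideal :: "'a set \<Rightarrow> ('a \<Rightarrow> 'a \<Rightarrow> bool) \<Rightarrow> 'a set \<Rightarrow> bool" where
  "proper_ideal P le I \<longleftrightarrow> I \<subseteq> P \<and> I \<noteq> {} \<and> I \<noteq> P \<and>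
     (\<forall>x\<in>I. \<forall>y\<in>P. le y x \<longrightarrow> y \<in> I)"

text \<open>Bier poset: the interval [x,y] is encoded as Some (x,y); the extra top element is None.\<close>
definition bier_carrier :: "'a set \<Rightarrow> ('a \<Rightarrow> 'a \<Rightarrow> bool) \<Rightarrow> 'a set \<Rightarrow> ('a \<times> 'a) option set" where
  "bier_carrier P le I =
     insert None {Some (x, y) | x y. x \<in> I \<and> y \<in> P \<and> y \<notin> I \<and> le x y}"

definition bier_le :: "('a \<Rightarrow> 'a \<Rightarrow> bool) \<Rightarrow> ('a \<times> 'a) option \<Rightarrow> ('a \<times> 'a) option \<Rightarrow> bool" where
  "bier_le le a b = (case b of
       None \<Rightarrow> True
     | Some (x, y) \<Rightarrow> (case a of
          None \<Rightarrow> False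
        | Some (x', y') \<Rightarrow> le x' x \<and> le y y'))"

end

theory Submission
  imports Defs
begin

(*
  Let n be the rank of the top element of P. Bier(P, I) is graded with rank
  r [x, y] = rank x + (n - rank y) and r(top) = n: a cover [x', y'] < [x, y] moves exactly one
  endpoint along a cover of P, and [x', y'] is covered by the top only if x' is covered by y'.
  A function that vanishes at the bottom and increases by one along covers is the rank
  function, and it makes all maximal chains equally long.
  The interval between [x', y'] and [x, y] is the product [x', x] * [y, y'] of intervals of P,
  so its alternating sum factors and vanishes. The interval between [x', y'] and the top has
  alternating sum (-1)^n (1 + S), where S sums (-1)^(rank u + rank v) over all
  x' <= u <= v <= y' with u in I and v not in I. The sum over v in [u, y'] vanishes in P, so S
  is minus the same sum over pairs u <= v inside I; exchanging the order of summation, the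
  sum over u in [x', v] vanishes unless v = x', hence S = -1.
*)

lemma card_even_eq_card_odd_iff:
  assumes "finite S"
  shows "card {z\<in>S. even (g z)} = card {z\<in>S. odd (g z)} \<longleftrightarrow> (\<Sum>z\<in>S. (-1::int) ^ g z) = 0"
proof -
  have "S = {z\<in>S. even (g z)} \<union> {z\<in>S. odd (g z)}" by auto
  then have "(\<Sum>z\<in>S. (-1::int) ^ g z)
      = (\<Sum>z\<in>{z\<in>S. even (g z)}. (-1) ^ g z) + (\<Sum>z\<in>{z\<in>S. odd (g z)}. (-1) ^ g z)"
    using assms by (subst \<open>S = _\<close>, intro sum.union_disjoint) auto
  also have "\<dots> = int (card {z\<in>S. even (g z)}) - int (card {z\<in>S. odd (g z)})"
    by simp
  finally show ?thesis by simp
qed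

lemma eulerian_iff_alternating_sum:
  "eulerian P le \<longleftrightarrow> graded P le \<and>
     (\<forall>x\<in>P. \<forall>y\<in>P. le x y \<and> x \<noteq> y \<longrightarrow>
        (\<Sum>z\<in>closed_interval P le x y. (-1::int) ^ rank P le z) = 0)"
proof -
  have "finite (closed_interval P le x y)" if "graded P le" for x y
    using that unfolding graded_def closed_interval_def by simp
  then show ?thesis
    unfolding eulerian_def by (auto simp: card_even_eq_card_odd_iff)
qed

section \<open>Finite posets, covers and rank\<close>

lemma is_chain_subset: "is_chain P le D \<Longrightarrow> C \<subseteq> D \<Longrightarrow> is_chain P le C"
  unfolding is_chain_def by blast

locale finite_poset =
  fixes P :: "'a set" and le :: "'a \<Rightarrow> 'a \<Rightarrow> bool"
  assumes finite_carrier: "finite P" and poset: "is_poset P le"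
begin

lemma refl_le: "x \<in> P \<Longrightarrow> le x x"
  using poset unfolding is_poset_def by blast

lemma antisym_le: "x \<in> P \<Longrightarrow> y \<in> P \<Longrightarrow> le x y \<Longrightarrow> le y x \<Longrightarrow> x = y"
  using poset unfolding is_poset_def by blast

lemma trans_le: "x \<in> P \<Longrightarrow> y \<in> P \<Longrightarrow> z \<in> P \<Longrightarrow> le x y \<Longrightarrow> le y z \<Longrightarrow> le x z"
  using poset unfolding is_poset_def by blast

lemma finite_chain: "is_chain P le C \<Longrightarrow> finite C"
  using finite_carrier finite_subset unfolding is_chain_def by blast

lemma closed_interval_subset: "closed_interval P le x y \<subseteq> P"
  unfolding closed_interval_def by blast

lemma finite_closed_interval: "finite (closed_interval P le x y)"
  using finite_carrier closed_interval_subset finite_subset by blast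

lemma closed_interval_same: "x \<in> P \<Longrightarrow> closed_interval P le x x = {x}"
  unfolding closed_interval_def using antisym_le refl_le by auto

lemma closed_interval_empty:
  "x \<in> P \<Longrightarrow> y \<in> P \<Longrightarrow> \<not> le x y \<Longrightarrow> closed_interval P le x y = {}"
  unfolding closed_interval_def using trans_le by blast

lemma ex_maximal:
  assumes "A \<subseteq> P" and "a \<in> A"
  shows "\<exists>m\<in>A. \<forall>b\<in>A. le m b \<longrightarrow> b = m"
proof -
  \<comment> \<open>an element of A whose up-set in A is smallest is maximal\<close>
  define up where "up m = {a\<in>A. le m a}" for m
  obtain m where "m \<in> A" and m_least: "\<And>a. a \<in> A \<Longrightarrow> card (up m) \<le> card (up a)"
    using ex_has_least_nat[of "\<lambda>m. m \<in> A" a "\<lambda>m. card (up m)"] \<open>a \<in> A\<close> by blast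
  have "a = m" if "a \<in> A" "le m a" for a
  proof (rule ccontr)
    assume "a \<noteq> m"
    have "m \<notin> up a"
      unfolding up_def using that \<open>m \<in> A\<close> \<open>a \<noteq> m\<close> assms(1) antisym_le by blast
    then have "up a \<subset> up m"
      unfolding up_def using that \<open>m \<in> A\<close> assms(1) refl_le trans_le by blast
    moreover have "finite (up m)"
      by (rule finite_subset[OF _ finite_carrier]) (use assms(1) in \<open>auto simp: up_def\<close>)
    ultimately have "card (up a) < card (up m)" by (rule psubset_card_mono[rotated])
    then show False using m_least[OF \<open>a \<in> A\<close>] by simp
  qed
  then show ?thesis using \<open>m \<in> A\<close> by blast
qed


lemma chain_greatest:
  assumes "is_chain P le C" and "c \<in> C"
  shows "\<exists>m\<in>C. \<forall>c\<in>C. le c m"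
proof -
  have "C \<subseteq> P" using assms(1) unfolding is_chain_def by blast
  then obtain m where "m \<in> C" and m_max: "\<forall>a\<in>C. le m a \<longrightarrow> a = m"
    using ex_maximal assms(2) by blast
  have "le c m" if "c \<in> C" for c
    using assms(1) that \<open>m \<in> C\<close> m_max refl_le \<open>C \<subseteq> P\<close> unfolding is_chain_def by blast
  then show ?thesis using \<open>m \<in> C\<close> by blast
qed

definition covers :: "'a \<Rightarrow> 'a \<Rightarrow> bool" where
  "covers x y \<longleftrightarrow> x \<in> P \<and> y \<in> P \<and> le x y \<and> x \<noteq> y \<and> closed_interval P le x y \<subseteq> {x, y}"

lemma ex_covered_above:
  assumes "x \<in> P" "z \<in> P" "le x z" "x \<noteq> z"
  shows "\<exists>w. le x w \<and> covers w z"
proof -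
  define A where "A = {w\<in>P. le x w \<and> le w z \<and> w \<noteq> z}"
  have "x \<in> A" using assms refl_le unfolding A_def by blast
  then obtain w where "w \<in> A" and w_max: "\<forall>a\<in>A. le w a \<longrightarrow> a = w"
    using ex_maximal[of A] unfolding A_def by blast
  have "v \<in> A" if "v \<in> closed_interval P le w z" "v \<noteq> z" for v
    using that \<open>w \<in> A\<close> trans_le assms(1) unfolding A_def closed_interval_def by blast
  then have "covers w z"
    using \<open>w \<in> A\<close> w_max assms(2) unfolding covers_def A_def closed_interval_def by blast
  then show ?thesis using \<open>w \<in> A\<close> unfolding A_def by blast
qed

lemma rank_eqI:
  assumes "\<And>D. is_chain P le D \<Longrightarrow> \<forall>d\<in>D. le d z \<Longrightarrow> card D \<le> Suc k"
    and "is_chain P le C" "\<forall>c\<in>C. le c z" "card C = Suc k"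
  shows "rank P le z = k"
proof -
  let ?S = "{card C | C. is_chain P le C \<and> (\<forall>c\<in>C. le c z)}"
  have "?S \<subseteq> card ` Pow P" unfolding is_chain_def by blast
  then have "finite ?S" using finite_carrier finite_subset by blast
  moreover have "Suc k \<in> ?S"
    using assms(2-4) by (intro CollectI exI[of _ C]) simp
  ultimately have "Max ?S = Suc k"
    using assms(1) by (intro Max_eqI) auto
  then show ?thesis unfolding rank_def by simp
qed

definition longest_chain_in :: "'a set \<Rightarrow> 'a set \<Rightarrow> bool" where
  "longest_chain_in Q L \<longleftrightarrow> is_chain P le L \<and> L \<subseteq> Q \<and>
     (\<forall>D. is_chain P le D \<and> D \<subseteq> Q \<longrightarrow> card D \<le> card L)"

lemma ex_longest_chain_in: "\<exists>L. longest_chain_in Q L"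
proof -
  have "card C \<le> card P" if "is_chain P le C" for C
    using that finite_carrier card_mono unfolding is_chain_def by blast
  moreover have "is_chain P le {}" unfolding is_chain_def by blast
  ultimately have "\<exists>L. (is_chain P le L \<and> L \<subseteq> Q) \<and>
      (\<forall>D. is_chain P le D \<and> D \<subseteq> Q \<longrightarrow> card D \<le> card L)"
    by (intro ex_has_greatest_nat[where b = "Suc (card P)"]) (auto simp: less_Suc_eq_le)
  then show ?thesis unfolding longest_chain_in_def by blast
qed

lemma longest_chain_in_mem:
  assumes "longest_chain_in Q L" "w \<in> Q" "is_chain P le (insert w L)"
  shows "w \<in> L"
proof (rule ccontr)
  assume "w \<notin> L"
  then have "card (insert w L) = Suc (card L)"
    using assms(1) finite_chain unfolding longest_chain_in_def by simp
  moreover have "card (insert w L) \<le> card L"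
    using assms unfolding longest_chain_in_def by blast
  ultimately show False by simp
qed

lemma longest_chain_below_mem:
  assumes "z \<in> P" and L: "longest_chain_in {w\<in>P. le w z} L"
  shows "z \<in> L"
proof -
  have "is_chain P le (insert z L)"
    using L assms(1) refl_le unfolding longest_chain_in_def is_chain_def by auto
  then show ?thesis using longest_chain_in_mem[OF L] assms(1) refl_le by blast
qed

lemma longest_chain_above_mem:
  assumes "z \<in> P" and L: "longest_chain_in {w\<in>P. le z w} L"
  shows "z \<in> L"
proof -
  have "is_chain P le (insert z L)"
    using L assms(1) refl_le unfolding longest_chain_in_def is_chain_def by auto
  then show ?thesis using longest_chain_in_mem[OF L] assms(1) refl_le by blast
qed

lemma rank_eq_card_longest:
  assumes "z \<in> P" and L: "longest_chain_in {w\<in>P. le w z} L"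
  shows "rank P le z = card L - 1"
proof -
  have L_chain: "is_chain P le L" and L_below: "L \<subseteq> {w\<in>P. le w z}"
    using L unfolding longest_chain_in_def by blast+
  have "card L > 0"
    using longest_chain_below_mem[OF assms] finite_chain[OF L_chain] card_gt_0_iff by blast
  then have "Suc (card L - 1) = card L" by simp
  moreover have "card D \<le> card L" if "is_chain P le D" "\<forall>d\<in>D. le d z" for D
  proof -
    have "D \<subseteq> {w\<in>P. le w z}" using that unfolding is_chain_def by blast
    then show ?thesis using L that(1) unfolding longest_chain_in_def by blast
  qed
  ultimately show ?thesis
    using L_chain L_below by (intro rank_eqI[where C = L]) auto
qed

lemma maximal_chain_insert:
  assumes "maximal_chain P le C" "w \<in> P" "\<forall>c\<in>C. le c w \<or> le w c"
  shows "w \<in> C"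
proof -
  have "is_chain P le (insert w C)"
    using assms refl_le unfolding maximal_chain_def is_chain_def by auto
  then show ?thesis using assms(1) unfolding maximal_chain_def by blast
qed

lemma maximal_chain_ex_covered:
  assumes C: "maximal_chain P le C" and "z \<in> C" "c \<in> C" "le c z" "c \<noteq> z"
  shows "\<exists>m\<in>C. covers m z"
proof -
  have CP: "C \<subseteq> P" using C unfolding maximal_chain_def is_chain_def by blast
  have "is_chain P le {c\<in>C. le c z \<and> c \<noteq> z}"
    using C by (auto intro: is_chain_subset simp: maximal_chain_def)
  then obtain m where m: "m \<in> C" "le m z" "m \<noteq> z"
    and m_greatest: "\<forall>c\<in>C. le c z \<and> c \<noteq> z \<longrightarrow> le c m"
    using chain_greatest[of "{c\<in>C. le c z \<and> c \<noteq> z}" c] assms by auto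
  have "w \<in> {m, z}" if w: "w \<in> closed_interval P le m z" for w
  proof -
    \<comment> \<open>w is comparable to every element of C, so it lies in C by maximality\<close>
    have "le c w \<or> le w c" if "c \<in> C" for c
    proof -
      have "c \<in> P" using CP that by blast
      have "le c z \<or> le z c"
        using C that \<open>z \<in> C\<close> unfolding maximal_chain_def is_chain_def by blast
      moreover have "le c w" if "le c z" "c \<noteq> z"
        using that m_greatest \<open>c \<in> C\<close> \<open>c \<in> P\<close> m CP w trans_le[of c m w]
        unfolding closed_interval_def by blast
      ultimately show ?thesis
        using w \<open>c \<in> P\<close> \<open>z \<in> C\<close> CP trans_le[of w z c]
        unfolding closed_interval_def by blast
    qed
    then have "w \<in> C" using maximal_chain_insert[OF C] w unfolding closed_interval_def by blast
    then show ?thesis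
      using w m m_greatest CP antisym_le unfolding closed_interval_def by blast
  qed
  then show ?thesis using m CP \<open>z \<in> C\<close> unfolding covers_def by blast
qed

lemma maximal_chain_Un:
  assumes "x \<in> P" "y \<in> P" "le x y" and xy: "closed_interval P le x y \<subseteq> {x, y}"
    and L: "longest_chain_in {w\<in>P. le w x} L" and U: "longest_chain_in {w\<in>P. le y w} U"
  shows "maximal_chain P le (L \<union> U)"
proof -
  have L_chain: "is_chain P le L" and L_below: "L \<subseteq> {w\<in>P. le w x}"
    and U_chain: "is_chain P le U" and U_above: "U \<subseteq> {w\<in>P. le y w}"
    using L U unfolding longest_chain_in_def by blast+
  have "x \<in> L" "y \<in> U"
    using longest_chain_below_mem[OF assms(1) L] longest_chain_above_mem[OF assms(2) U] .
  have "le a u" if "a \<in> L" "u \<in> U" for a u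
    using that L_below U_above assms(1-3) trans_le[of a x y] trans_le[of a y u] by blast
  then have chain: "is_chain P le (L \<union> U)"
    using L_chain U_chain unfolding is_chain_def by blast
  have "w \<in> L \<union> U" if D: "is_chain P le D" "L \<union> U \<subseteq> D" and "w \<in> D" for D w
  proof -
    have "w \<in> P" using D \<open>w \<in> D\<close> unfolding is_chain_def by blast
    have insert_chain: "is_chain P le (insert w A)" if "A \<subseteq> L \<union> U" for A
      by (rule is_chain_subset[OF D(1)]) (use that D(2) \<open>w \<in> D\<close> in blast)
    have "le x w \<or> le w x" "le y w \<or> le w y"
      using D \<open>w \<in> D\<close> \<open>x \<in> L\<close> \<open>y \<in> U\<close> unfolding is_chain_def by blast+
    then consider "le y w" | "le w x" | "le x w" "le w y" by blast
    then show ?thesis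
    proof cases
      case 1
      then show ?thesis using longest_chain_in_mem[OF U] insert_chain \<open>w \<in> P\<close> by blast
    next
      case 2
      then show ?thesis using longest_chain_in_mem[OF L] insert_chain \<open>w \<in> P\<close> by blast
    next
      case 3
      then show ?thesis
        using xy \<open>w \<in> P\<close> \<open>x \<in> L\<close> \<open>y \<in> U\<close> unfolding closed_interval_def by blast
    qed
  qed
  then show ?thesis using chain unfolding maximal_chain_def by blast
qed

lemma rank_covers_Suc:
  assumes equal_chains: "\<forall>C D. maximal_chain P le C \<and> maximal_chain P le D \<longrightarrow> card C = card D"
    and "covers x y"
  shows "rank P le y = Suc (rank P le x)"
proof -
  have "x \<in> P" "y \<in> P" "le x y" "x \<noteq> y" and xy: "closed_interval P le x y \<subseteq> {x, y}"
    using \<open>covers x y\<close> unfolding covers_def by blast+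
  obtain Lx where Lx: "longest_chain_in {w\<in>P. le w x} Lx"
    using ex_longest_chain_in by blast
  obtain Ly where Ly: "longest_chain_in {w\<in>P. le w y} Ly"
    using ex_longest_chain_in by blast
  obtain U where U: "longest_chain_in {w\<in>P. le y w} U"
    using ex_longest_chain_in by blast
  have "finite Lx" "finite Ly" "finite U"
    using Lx Ly U finite_chain unfolding longest_chain_in_def by blast+
  have "y \<in> Ly" "y \<in> U"
    using longest_chain_below_mem[OF \<open>y \<in> P\<close> Ly] longest_chain_above_mem[OF \<open>y \<in> P\<close> U] .
  have "Lx \<inter> U = {}"
    using Lx U \<open>x \<in> P\<close> \<open>y \<in> P\<close> \<open>le x y\<close> \<open>x \<noteq> y\<close> trans_le antisym_le
    unfolding longest_chain_in_def by blast
  moreover have "Ly \<inter> U = {y}"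
    using Ly U \<open>y \<in> Ly\<close> \<open>y \<in> U\<close> \<open>y \<in> P\<close> antisym_le unfolding longest_chain_in_def by blast
  moreover have "card (Lx \<union> U) = card (Ly \<union> U)"
    using equal_chains maximal_chain_Un[OF \<open>x \<in> P\<close> \<open>y \<in> P\<close> \<open>le x y\<close> xy Lx U]
      maximal_chain_Un[OF \<open>y \<in> P\<close> \<open>y \<in> P\<close> refl_le[OF \<open>y \<in> P\<close>] _ Ly U]
      closed_interval_same[OF \<open>y \<in> P\<close>] by blast
  \<comment> \<open>Lx \<union> U and Ly \<union> U are maximal chains; the second one has the extra element y\<close>
  ultimately have "card Ly = Suc (card Lx)"
    using card_Un_Int[OF \<open>finite Lx\<close> \<open>finite U\<close>] card_Un_Int[OF \<open>finite Ly\<close> \<open>finite U\<close>] by simp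
  moreover have "card Lx > 0"
    using longest_chain_below_mem[OF \<open>x \<in> P\<close> Lx] \<open>finite Lx\<close> card_gt_0_iff by blast
  ultimately show ?thesis
    using rank_eq_card_longest[OF \<open>x \<in> P\<close> Lx] rank_eq_card_longest[OF \<open>y \<in> P\<close> Ly] by simp
qed

context
  fixes r :: "'a \<Rightarrow> nat"
  assumes r_covers: "\<And>x y. covers x y \<Longrightarrow> r y = Suc (r x)"
begin

lemma covers_Suc_imp_less:
  assumes "x \<in> P" "y \<in> P" "le x y" "x \<noteq> y"
  shows "r x < r y"
  using assms(2-4)
proof (induction "r y" arbitrary: y rule: less_induct)
  case less
  obtain w where "le x w" "covers w y"
    using ex_covered_above[OF assms(1) less.prems] by blast
  then have "w \<in> P" and r_y: "r y = Suc (r w)"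
    using r_covers unfolding covers_def by blast+
  show ?case
  proof (cases "x = w")
    case False
    then have "r x < r w" using less.hyps[of w] r_y \<open>w \<in> P\<close> \<open>le x w\<close> by simp
    then show ?thesis using r_y by simp
  qed (use r_y in simp)
qed

lemma covers_Suc_card_chain_below:
  assumes "is_chain P le C" "\<forall>c\<in>C. le c z" "z \<in> P"
  shows "card C \<le> Suc (r z)"
proof -
  have "C \<subseteq> P" using assms(1) unfolding is_chain_def by blast
  have "inj_on r C"
  proof (rule inj_onI)
    fix c d assume "c \<in> C" "d \<in> C" "r c = r d"
    then show "c = d"
      using assms(1) \<open>C \<subseteq> P\<close> covers_Suc_imp_less[of c d] covers_Suc_imp_less[of d c]
      unfolding is_chain_def by (metis less_irrefl subsetD)
  qed
  moreover have "r ` C \<subseteq> {..r z}"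
    using assms \<open>C \<subseteq> P\<close> covers_Suc_imp_less[of _ z] by (fastforce simp: less_imp_le)
  ultimately have "card C \<le> card {..r z}"
    using card_inj_on_le by blast
  then show ?thesis by simp
qed

context
  fixes b :: 'a
  assumes b_in: "b \<in> P" and b_least: "\<And>x. x \<in> P \<Longrightarrow> le b x" and r_b: "r b = 0"
begin

lemma covers_Suc_ex_chain_below:
  assumes "z \<in> P"
  shows "\<exists>C. is_chain P le C \<and> (\<forall>c\<in>C. le c z) \<and> card C = Suc (r z)"
  using assms
proof (induction "r z" arbitrary: z rule: less_induct)
  case less
  show ?case
  proof (cases "z = b")
    case True
    then show ?thesis
      using r_b b_in refl_le by (intro exI[of _ "{b}"]) (auto simp: is_chain_def)
  next
    case False
    then obtain w where "covers w z"
      using ex_covered_above[OF b_in less.prems b_least[OF less.prems]] by blast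
    then have "w \<in> P" "le w z" "w \<noteq> z" and r_z: "r z = Suc (r w)"
      using r_covers unfolding covers_def by blast+
    then obtain C where C: "is_chain P le C" "\<forall>c\<in>C. le c w" "card C = Suc (r w)"
      using less.hyps[of w] by auto
    have "C \<subseteq> P" using C(1) unfolding is_chain_def by blast
    then have "z \<notin> C" and below_z: "\<forall>c\<in>C. le c z"
      using C(2) \<open>w \<in> P\<close> \<open>le w z\<close> \<open>w \<noteq> z\<close> less.prems antisym_le trans_le by blast+
    moreover have "is_chain P le (insert z C)"
      using C(1) below_z less.prems refl_le unfolding is_chain_def by auto
    ultimately show ?thesis
      using C(3) r_z finite_chain[OF C(1)] less.prems refl_le
      by (intro exI[of _ "insert z C"]) auto
  qed
qed

lemma covers_Suc_rank_eq:
  assumes "z \<in> P"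
  shows "rank P le z = r z"
  using covers_Suc_ex_chain_below[OF assms] covers_Suc_card_chain_below assms
  by (metis rank_eqI)

lemma covers_Suc_card_maximal_chain:
  assumes C: "maximal_chain P le C" and "t \<in> P" and t_greatest: "\<forall>x\<in>P. le x t"
  shows "card C = Suc (r t)"
proof -
  have C_chain: "is_chain P le C" and "C \<subseteq> P"
    using C unfolding maximal_chain_def is_chain_def by blast+
  have "b \<in> C" "t \<in> C"
    using maximal_chain_insert[OF C] b_in b_least \<open>t \<in> P\<close> t_greatest \<open>C \<subseteq> P\<close> by blast+
  \<comment> \<open>every element of C other than b covers another element of C, so r maps C onto {..r t}\<close>
  have "k \<in> r ` C" if "k \<le> r t" for k
    using that
  proof (induction k rule: inc_induct)
    case base
    then show ?case using \<open>t \<in> C\<close> by blast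
  next
    case (step n)
    then obtain z where "z \<in> C" "r z = Suc n" by (metis imageE)
    then have "z \<noteq> b" using r_b by auto
    then obtain m where "m \<in> C" "covers m z"
      using maximal_chain_ex_covered[OF C \<open>z \<in> C\<close> \<open>b \<in> C\<close>] b_least \<open>z \<in> C\<close> \<open>C \<subseteq> P\<close> by blast
    then show ?case using r_covers \<open>r z = Suc n\<close> by force
  qed
  then have "{..r t} \<subseteq> r ` C" by blast
  then have "Suc (r t) \<le> card (r ` C)"
    using card_mono[OF finite_imageI[OF finite_chain[OF C_chain]]] by fastforce
  also have "\<dots> \<le> card C"
    using card_image_le[OF finite_chain[OF C_chain]] .
  moreover have "card C \<le> Suc (r t)"
    using covers_Suc_card_chain_below[OF C_chain _ \<open>t \<in> P\<close>] t_greatest \<open>C \<subseteq> P\<close> by blast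
  ultimately show ?thesis by simp
qed

end

end

definition rank_sign :: "'a \<Rightarrow> int" where
  "rank_sign z = (-1) ^ rank P le z"

lemma rank_sign_square: "rank_sign x * rank_sign x = 1"
  unfolding rank_sign_def by (simp add: minus_one_power_iff)

lemma alternating_sum_closed_interval:
  assumes "eulerian P le" "x \<in> P" "y \<in> P"
  shows "(\<Sum>z\<in>closed_interval P le x y. rank_sign z) = (if x = y then rank_sign x else 0)"
proof (cases "le x y")
  case True
  then show ?thesis
    using assms closed_interval_same[OF \<open>x \<in> P\<close>]
    unfolding eulerian_iff_alternating_sum rank_sign_def by auto
qed (use assms closed_interval_empty refl_le in auto)

end

locale graded_poset =
  fixes P :: "'a set" and le :: "'a \<Rightarrow> 'a \<Rightarrow> bool" and bot top :: 'a
  assumes graded: "graded P le"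
    and bot_in: "bot \<in> P" and bot_least: "\<And>x. x \<in> P \<Longrightarrow> le bot x"
    and top_in: "top \<in> P" and top_greatest: "\<And>x. x \<in> P \<Longrightarrow> le x top"

sublocale graded_poset \<subseteq> finite_poset
  using graded unfolding graded_def by unfold_locales blast+

context graded_poset
begin

lemma rank_covers: "covers x y \<Longrightarrow> rank P le y = Suc (rank P le x)"
  using rank_covers_Suc graded unfolding graded_def by blast

lemma rank_le_rank_top:
  assumes "x \<in> P"
  shows "rank P le x \<le> rank P le top"
  using covers_Suc_imp_less[where r = "rank P le", OF rank_covers assms top_in top_greatest[OF assms]]
  by fastforce

lemma rank_bot: "rank P le bot = 0"
proof (rule rank_eqI[where C = "{bot}"])
  show "card D \<le> Suc 0" if "is_chain P le D" "\<forall>d\<in>D. le d bot" for D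
  proof -
    have "D \<subseteq> {bot}"
      using that bot_in bot_least antisym_le unfolding is_chain_def by blast
    then show ?thesis using card_mono[of "{bot}" D] by simp
  qed
qed (use bot_in refl_le in \<open>auto simp: is_chain_def\<close>)

end

section \<open>The Bier poset\<close>

lemma bier_le_simps [simp]:
  "bier_le le (Some (x', y')) (Some (x, y)) \<longleftrightarrow> le x' x \<and> le y y'"
  "bier_le le a None"
  "\<not> bier_le le None (Some p)"
  unfolding bier_le_def by (auto split: prod.splits)

lemma Some_in_bier_carrier_iff [simp]:
  "Some (x, y) \<in> bier_carrier P le I \<longleftrightarrow> x \<in> I \<and> y \<in> P \<and> y \<notin> I \<and> le x y"
  unfolding bier_carrier_def by auto

lemma None_in_bier_carrier [simp]: "None \<in> bier_carrier P le I"
  unfolding bier_carrier_def by auto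

lemma bier_carrier_cases:
  assumes "a \<in> bier_carrier P le I"
  obtains "a = None" | x y where "a = Some (x, y)" "x \<in> I" "y \<in> P" "y \<notin> I" "le x y"
  using assms unfolding bier_carrier_def by auto

lemma bier_is_poset:
  assumes "is_poset P le" and "I \<subseteq> P"
  shows "is_poset (bier_carrier P le I) (bier_le le)"
  unfolding is_poset_def
proof (intro conjI ballI impI)
  have refl: "\<And>x. x \<in> P \<Longrightarrow> le x x"
    and antisym: "\<And>x y. x \<in> P \<Longrightarrow> y \<in> P \<Longrightarrow> le x y \<Longrightarrow> le y x \<Longrightarrow> x = y"
    and trans: "\<And>x y z. x \<in> P \<Longrightarrow> y \<in> P \<Longrightarrow> z \<in> P \<Longrightarrow> le x y \<Longrightarrow> le y z \<Longrightarrow> le x z"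
    using assms(1) unfolding is_poset_def by blast+
  fix a c d
  assume a: "a \<in> bier_carrier P le I" and c: "c \<in> bier_carrier P le I"
    and d: "d \<in> bier_carrier P le I"
  show "bier_le le a a"
    using a assms(2) refl by (elim bier_carrier_cases) auto
  show "a = c" if "bier_le le a c \<and> bier_le le c a"
    using a c that assms(2) antisym
    by (elim bier_carrier_cases) auto
  show "bier_le le a d" if "bier_le le a c \<and> bier_le le c d"
    using a c d that assms(2)
    by (elim bier_carrier_cases) (auto intro: trans)
qed

locale bier_construction = graded_poset +
  fixes I :: "'a set"
  assumes ideal: "proper_ideal P le I"
begin

abbreviation Bier :: "('a \<times> 'a) option set" where
  "Bier \<equiv> bier_carrier P le I"

abbreviation ble :: "('a \<times> 'a) option \<Rightarrow> ('a \<times> 'a) option \<Rightarrow> bool" where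
  "ble \<equiv> bier_le le"

lemma ideal_subset: "I \<subseteq> P"
  using ideal unfolding proper_ideal_def by blast

lemma ideal_down_closed: "x \<in> I \<Longrightarrow> y \<in> P \<Longrightarrow> le y x \<Longrightarrow> y \<in> I"
  using ideal unfolding proper_ideal_def by blast

lemma bot_in_ideal: "bot \<in> I"
  using ideal ideal_down_closed bot_in bot_least unfolding proper_ideal_def by blast

lemma top_notin_ideal: "top \<notin> I"
  using ideal ideal_down_closed top_greatest unfolding proper_ideal_def by blast

sublocale Bier: finite_poset Bier ble
proof
  have "Bier \<subseteq> insert None (Some ` (P \<times> P))"
    using ideal_subset unfolding bier_carrier_def by blast
  then show "finite Bier" using finite_carrier finite_subset by blast
  show "is_poset Bier ble" using bier_is_poset[OF poset ideal_subset] .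
qed

lemma bier_interval_Some_Some:
  assumes "Some (x, y) \<in> Bier"
  shows "closed_interval Bier ble (Some (x', y')) (Some (x, y))
    = Some ` (closed_interval P le x' x \<times> closed_interval P le y y')"
proof (intro set_eqI iffI)
  fix a assume "a \<in> closed_interval Bier ble (Some (x', y')) (Some (x, y))"
  then show "a \<in> Some ` (closed_interval P le x' x \<times> closed_interval P le y y')"
    using ideal_subset unfolding closed_interval_def by (cases a) auto
next
  fix a assume "a \<in> Some ` (closed_interval P le x' x \<times> closed_interval P le y y')"
  then obtain u v where a: "a = Some (u, v)" and "u \<in> P" "v \<in> P" "le x' u" "le u x" "le y v" "le v y'"
    unfolding closed_interval_def by blast
  moreover have "u \<in> I" "v \<notin> I"
    using assms \<open>u \<in> P\<close> \<open>v \<in> P\<close> \<open>le u x\<close> \<open>le y v\<close> ideal_down_closed by auto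
  moreover have "le u v"
    using assms ideal_subset \<open>u \<in> P\<close> \<open>v \<in> P\<close> \<open>le u x\<close> \<open>le y v\<close> trans_le
    by (metis Some_in_bier_carrier_iff subsetD)
  ultimately show "a \<in> closed_interval Bier ble (Some (x', y')) (Some (x, y))"
    unfolding closed_interval_def by simp
qed

lemma bier_interval_Some_None:
  "closed_interval Bier ble (Some (x', y')) None
    = insert None (Some ` {(u, v). Some (u, v) \<in> Bier \<and> le x' u \<and> le v y'})"
  unfolding closed_interval_def by (auto elim: bier_carrier_cases)

lemma bier_covers_None:
  assumes "Bier.covers (Some (x', y')) None"
  shows "covers x' y'"
proof -
  have in_Bier: "Some (x', y') \<in> Bier"
    and pairs: "{(u, v). Some (u, v) \<in> Bier \<and> le x' u \<and> le v y'} \<subseteq> {(x', y')}"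
    using assms unfolding Bier.covers_def bier_interval_Some_None by auto
  \<comment> \<open>an element strictly between x' and y' would split the interval [x', y'] at the ideal\<close>
  have "w \<in> {x', y'}" if "w \<in> closed_interval P le x' y'" for w
  proof (cases "w \<in> I")
    case True
    then have "(w, y') \<in> {(u, v). Some (u, v) \<in> Bier \<and> le x' u \<and> le v y'}"
      using that in_Bier refl_le unfolding closed_interval_def by auto
    then show ?thesis using pairs by blast
  next
    case False
    then have "(x', w) \<in> {(u, v). Some (u, v) \<in> Bier \<and> le x' u \<and> le v y'}"
      using that in_Bier refl_le ideal_subset unfolding closed_interval_def by auto
    then show ?thesis using pairs by blast
  qed
  then show ?thesis
    using in_Bier ideal_subset unfolding covers_def by auto
qed

lemma bier_covers_Some:
  assumes "Bier.covers (Some (x', y')) (Some (x, y))"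
  shows "x' = x \<and> covers y y' \<or> y = y' \<and> covers x' x"
proof -
  have in_Bier: "Some (x', y') \<in> Bier" "Some (x, y) \<in> Bier"
    and "le x' x" "le y y'" "(x', y') \<noteq> (x, y)"
    and "closed_interval Bier ble (Some (x', y')) (Some (x, y)) \<subseteq> {Some (x', y'), Some (x, y)}"
    using assms unfolding Bier.covers_def by auto
  then have between: "closed_interval P le x' x \<times> closed_interval P le y y' \<subseteq> {(x', y'), (x, y)}"
    unfolding bier_interval_Some_Some[OF in_Bier(2)] by auto
  have "x \<in> P" "x' \<in> P" "y \<in> P" "y' \<in> P" using in_Bier ideal_subset by auto
  have "x \<in> closed_interval P le x' x" "x' \<in> closed_interval P le x' x"
    "y \<in> closed_interval P le y y'" "y' \<in> closed_interval P le y y'"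
    using \<open>x \<in> P\<close> \<open>x' \<in> P\<close> \<open>y \<in> P\<close> \<open>y' \<in> P\<close> \<open>le x' x\<close> \<open>le y y'\<close> refl_le
    unfolding closed_interval_def by auto
  \<comment> \<open>the corner (x, y') of the product interval must be one of its two elements\<close>
  then have "x' = x \<or> y = y'" using between by blast
  then show ?thesis
  proof
    assume "x' = x"
    then have "closed_interval P le y y' \<subseteq> {y, y'}"
      using between \<open>x \<in> closed_interval P le x' x\<close> by blast
    then show ?thesis
      using \<open>x' = x\<close> \<open>(x', y') \<noteq> (x, y)\<close> \<open>y \<in> P\<close> \<open>y' \<in> P\<close> \<open>le y y'\<close>
      unfolding covers_def by auto
  next
    assume "y = y'"
    then have "closed_interval P le x' x \<subseteq> {x', x}"
      using between \<open>y \<in> closed_interval P le y y'\<close> by blast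
    then show ?thesis
      using \<open>y = y'\<close> \<open>(x', y') \<noteq> (x, y)\<close> \<open>x \<in> P\<close> \<open>x' \<in> P\<close> \<open>le x' x\<close>
      unfolding covers_def by auto
  qed
qed

\<comment> \<open>no truncation: rank v \<le> rank top by rank_le_rank_top\<close>
fun bier_rank :: "('a \<times> 'a) option \<Rightarrow> nat" where
  "bier_rank None = rank P le top"
| "bier_rank (Some (u, v)) = rank P le u + (rank P le top - rank P le v)"

lemma bier_rank_covers:
  assumes "Bier.covers \<alpha> \<beta>"
  shows "bier_rank \<beta> = Suc (bier_rank \<alpha>)"
proof -
  have "\<alpha> \<in> Bier" "\<beta> \<in> Bier" "ble \<alpha> \<beta>" "\<alpha> \<noteq> \<beta>"
    using assms unfolding Bier.covers_def by blast+
  then obtain x' y' where \<alpha>: "\<alpha> = Some (x', y')"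
    by (cases \<alpha>; cases \<beta>) auto
  show ?thesis
  proof (cases \<beta>)
    case None
    then have "covers x' y'" using assms \<alpha> bier_covers_None by simp
    then show ?thesis
      using rank_covers rank_le_rank_top[of y'] \<alpha> None unfolding covers_def by force
  next
    case (Some p)
    then obtain x y where \<beta>: "\<beta> = Some (x, y)" by (cases p) blast
    then have "x' = x \<and> covers y y' \<or> y = y' \<and> covers x' x"
      using assms \<alpha> bier_covers_Some by simp
    then show ?thesis
      using rank_covers rank_le_rank_top[of y'] \<alpha> \<beta> unfolding covers_def by force
  qed
qed

lemma bier_bottom_in: "Some (bot, top) \<in> Bier"
  using bot_in_ideal top_notin_ideal top_in bot_least by simp

lemma bier_bottom_least:
  assumes "a \<in> Bier"
  shows "ble (Some (bot, top)) a"
  using assms bot_least top_greatest ideal_subset by (cases rule: bier_carrier_cases) auto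

lemma bier_rank_bottom: "bier_rank (Some (bot, top)) = 0"
  using rank_bot by simp

lemma rank_Bier: "a \<in> Bier \<Longrightarrow> rank Bier ble a = bier_rank a"
  using Bier.covers_Suc_rank_eq[where r = bier_rank,
      OF bier_rank_covers bier_bottom_in bier_bottom_least bier_rank_bottom] .

lemma graded_Bier: "graded Bier ble"
  unfolding graded_def
proof (intro conjI allI impI)
  show "is_bounded Bier ble"
    unfolding is_bounded_def
    using bier_bottom_in bier_bottom_least by (intro bexI[of _ "Some (bot, top)"] bexI[of _ None]) auto
  show "card C = card D" if "maximal_chain Bier ble C \<and> maximal_chain Bier ble D" for C D
    using that Bier.covers_Suc_card_maximal_chain[where r = bier_rank,
        OF bier_rank_covers bier_bottom_in bier_bottom_least bier_rank_bottom _ None_in_bier_carrier]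
    by simp
qed (use Bier.finite_carrier Bier.poset in auto)

lemma bier_rank_sign:
  assumes "v \<in> P"
  shows "(-1::int) ^ bier_rank (Some (u, v)) = rank_sign top * (rank_sign u * rank_sign v)"
proof -
  have "(-1::int) ^ (rank P le top - rank P le v) = (-1) ^ (rank P le top + rank P le v)"
    using neg_one_power_add_eq_neg_one_power_diff[OF rank_le_rank_top[OF assms]] by (rule sym)
  then show ?thesis unfolding rank_sign_def by (simp add: power_add)
qed

context
  assumes eulerian: "eulerian P le"
begin

lemma sum_rank_sign_pairs_across_ideal:
  assumes "Some (x', y') \<in> Bier"
  shows "(\<Sum>(u, v)\<in>{(u, v). Some (u, v) \<in> Bier \<and> le x' u \<and> le v y'}. rank_sign u * rank_sign v) = -1"
proof -
  have "x' \<in> I" "y' \<in> P" "y' \<notin> I" "le x' y'" using assms by auto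
  define A where "A = {u\<in>I. le x' u}"
  define A' where "A' = {v\<in>I. le v y'}"
  have "finite A" "finite A'"
    using ideal_subset unfolding A_def A'_def by (auto intro: finite_subset[OF _ finite_carrier])
  have pairs: "{(u, v). Some (u, v) \<in> Bier \<and> le x' u \<and> le v y'}
      = Sigma A (\<lambda>u. closed_interval P le u y' - I)"
    unfolding A_def closed_interval_def using ideal_subset by auto
  \<comment> \<open>the alternating sum over [u, y'] vanishes, so its part outside I is minus its part inside I\<close>
  have outside: "(\<Sum>v\<in>closed_interval P le u y' - I. rank_sign v) = - (\<Sum>v\<in>{v\<in>A'. le u v}. rank_sign v)"
    if "u \<in> A" for u
  proof -
    have "closed_interval P le u y' \<inter> I = {v\<in>A'. le u v}"
      unfolding A'_def closed_interval_def using ideal_subset by auto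
    moreover have "(\<Sum>v\<in>closed_interval P le u y'. rank_sign v) = 0"
      using alternating_sum_closed_interval[OF eulerian _ \<open>y' \<in> P\<close>, of u] that \<open>y' \<notin> I\<close>
        ideal_subset unfolding A_def by auto
    ultimately show ?thesis
      using sum.Int_Diff[OF finite_closed_interval, of rank_sign u y' I] by simp
  qed
  have inside: "(\<Sum>u\<in>{u\<in>A. le u v}. rank_sign u) = (if v = x' then rank_sign x' else 0)"
    if "v \<in> A'" for v
  proof -
    have "{u\<in>A. le u v} = closed_interval P le x' v"
      using that ideal_down_closed ideal_subset unfolding A_def A'_def closed_interval_def by auto
    then show ?thesis
      using alternating_sum_closed_interval[OF eulerian, of x' v] that \<open>x' \<in> I\<close>
        subsetD[OF ideal_subset] unfolding A'_def by auto
  qed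
  have "(\<Sum>(u, v)\<in>Sigma A (\<lambda>u. closed_interval P le u y' - I). rank_sign u * rank_sign v)
      = (\<Sum>u\<in>A. rank_sign u * (\<Sum>v\<in>closed_interval P le u y' - I. rank_sign v))"
    using \<open>finite A\<close> finite_closed_interval
    by (subst sum.Sigma[symmetric]) (auto simp: sum_distrib_left)
  also have "\<dots> = - (\<Sum>u\<in>A. \<Sum>v\<in>{v\<in>A'. le u v}. rank_sign u * rank_sign v)"
    using outside by (simp add: sum_distrib_left sum_negf)
  also have "\<dots> = - (\<Sum>v\<in>A'. \<Sum>u\<in>{u\<in>A. le u v}. rank_sign u * rank_sign v)"
    using sum.swap_restrict[OF \<open>finite A\<close> \<open>finite A'\<close>] by simp
  also have "\<dots> = - (\<Sum>v\<in>A'. if v = x' then rank_sign x' * rank_sign x' else 0)"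
    using inside by (auto simp: sum_distrib_right[symmetric] intro!: sum.cong)
  also have "\<dots> = -1"
    using \<open>x' \<in> I\<close> \<open>le x' y'\<close> \<open>finite A'\<close> rank_sign_square unfolding A'_def by simp
  finally show ?thesis unfolding pairs .
qed

lemma alternating_sum_bier_interval_top:
  assumes "Some (x', y') \<in> Bier"
  shows "(\<Sum>z\<in>closed_interval Bier ble (Some (x', y')) None. (-1::int) ^ bier_rank z) = 0"
proof -
  define T where "T = {(u, v). Some (u, v) \<in> Bier \<and> le x' u \<and> le v y'}"
  have "T \<subseteq> P \<times> P" using ideal_subset unfolding T_def by auto
  then have "finite T" using finite_carrier finite_subset by blast
  have "(\<Sum>z\<in>closed_interval Bier ble (Some (x', y')) None. (-1::int) ^ bier_rank z)
      = rank_sign top + (\<Sum>(u, v)\<in>T. rank_sign top * (rank_sign u * rank_sign v))"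
    using \<open>finite T\<close> \<open>T \<subseteq> P \<times> P\<close> bier_rank_sign
    unfolding bier_interval_Some_None T_def[symmetric]
    by (auto simp: sum.reindex rank_sign_def intro!: sum.cong)
  also have "\<dots> = 0"
    using sum_rank_sign_pairs_across_ideal[OF assms]
    unfolding T_def by (simp add: sum_distrib_left[symmetric] case_prod_beta')
  finally show ?thesis .
qed

lemma alternating_sum_bier_interval_Some:
  assumes "Some (x', y') \<in> Bier" "Some (x, y) \<in> Bier" "(x', y') \<noteq> (x, y)"
  shows "(\<Sum>z\<in>closed_interval Bier ble (Some (x', y')) (Some (x, y)). (-1::int) ^ bier_rank z) = 0"
proof -
  let ?X = "closed_interval P le x' x" and ?Y = "closed_interval P le y y'"
  have "(\<Sum>z\<in>closed_interval Bier ble (Some (x', y')) (Some (x, y)). (-1::int) ^ bier_rank z)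
      = (\<Sum>(u, v)\<in>?X \<times> ?Y. rank_sign top * (rank_sign u * rank_sign v))"
    using bier_rank_sign subsetD[OF closed_interval_subset]
    unfolding bier_interval_Some_Some[OF assms(2)]
    by (auto simp: sum.reindex intro!: sum.cong)
  also have "\<dots> = rank_sign top * (\<Sum>(u, v)\<in>?X \<times> ?Y. rank_sign u * rank_sign v)"
    by (simp add: sum_distrib_left case_prod_unfold)
  also have "\<dots> = rank_sign top * ((\<Sum>u\<in>?X. rank_sign u) * (\<Sum>v\<in>?Y. rank_sign v))"
    unfolding sum_product sum.cartesian_product ..
  also have "\<dots> = 0"
  proof -
    have "x' \<in> P" "x \<in> P" "y \<in> P" "y' \<in> P" using assms(1,2) ideal_subset by auto
    then show ?thesis using alternating_sum_closed_interval[OF eulerian] assms(3) by auto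
  qed
  finally show ?thesis .
qed

lemma eulerian_Bier: "eulerian Bier ble"
  unfolding eulerian_iff_alternating_sum
proof (intro conjI graded_Bier ballI impI)
  fix \<alpha> \<beta> assume "\<alpha> \<in> Bier" "\<beta> \<in> Bier" "ble \<alpha> \<beta> \<and> \<alpha> \<noteq> \<beta>"
  then obtain x' y' where \<alpha>: "\<alpha> = Some (x', y')"
    by (cases \<alpha>; cases \<beta>) auto
  have "(\<Sum>z\<in>closed_interval Bier ble \<alpha> \<beta>. (-1::int) ^ rank Bier ble z)
      = (\<Sum>z\<in>closed_interval Bier ble \<alpha> \<beta>. (-1) ^ bier_rank z)"
    by (intro sum.cong refl) (metis rank_Bier Bier.closed_interval_subset subsetD)
  also have "\<dots> = 0"
  proof (cases \<beta>)
    case None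
    then show ?thesis
      using alternating_sum_bier_interval_top \<open>\<alpha> \<in> Bier\<close> unfolding \<alpha> by simp
  next
    case (Some p)
    then obtain x y where \<beta>: "\<beta> = Some (x, y)" by (cases p) blast
    then show ?thesis
      using alternating_sum_bier_interval_Some \<open>\<alpha> \<in> Bier\<close> \<open>\<beta> \<in> Bier\<close> \<open>ble \<alpha> \<beta> \<and> \<alpha> \<noteq> \<beta>\<close>
      unfolding \<alpha> by simp
  qed
  finally show "(\<Sum>z\<in>closed_interval Bier ble \<alpha> \<beta>. (-1::int) ^ rank Bier ble z) = 0" .
qed

end

end

theorem theorem6:
  fixes P :: "'a set" and le :: "'a \<Rightarrow> 'a \<Rightarrow> bool" and I :: "'a set"
  assumes "eulerian P le"
    and "proper_ideal P le I"
  shows "eulerian (bier_carrier P le I) (bier_le le)"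
proof -
  obtain bot top where "bot \<in> P" "top \<in> P" "\<forall>x\<in>P. le bot x \<and> le x top"
    using assms(1) unfolding eulerian_def graded_def is_bounded_def by blast
  then interpret bier_construction P le bot top I
    using assms unfolding eulerian_def by unfold_locales blast+
  show ?thesis using eulerian_Bier[OF assms(1)] .
qed

end
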